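(* Let $\mathcal{A}$ be a complex Banach algebra with identity, $\lambda$ a nonzero complex number, and $M = \begin{pmatrix} A & B \\ C & D \end{pmatrix} \in M_2(\mathcal{A})$ with $A, D \in \mathcal{A}^d$. Suppose $BC, CB \in \mathcal{A}^d$ (so that the expressions below make sense), and $$BD = \lambda (BC)^\pi A B D^\pi \quad\text{and}\quad CA = \lambda (CB)^\pi D C A^\pi.$$ Put $P = \begin{pmatrix} A & 0 \\ 0 & D \end{pmatrix}$ and $Q = \begin{pmatrix} 0 & B \\ C & 0 \end{pmatrix}$, so $M=P+Q$, $P^d=\begin{pmatrix} A^d & 0 \\ 0 & D^d \end{pmatrix}$, $Q^d=\begin{pmatrix} 0 & B(CB)^d \\ C(BC)^d & 0 \end{pmatrix}$. Then $M \in M_2(\mathcal{A})^d$ and $$\begin{aligned} M^d ={}& \begin{pmatrix} A^d(BC)^\pi & A^\pi B(CB)^d \\ D^\pi C(BC)^d & D^d(CB)^\pi \end{pmatrix} + \sum_{n=0}^{\infty} (P^d)^{n+2} Q M^n Q^\pi + P^\pi \sum_{n=0}^{\infty} M^n P (Q^d)^{n+2} \\ &- \sum_{n=0}^{\infty} \sum_{k=0}^{\infty} (P^d)^{k+1} Q M^{n+k} P (Q^d)^{n+2} - \sum_{n=0}^{\infty} (P^d)^{n+2} Q M^n P Q^d.\end{aligned}$$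
   Context: $M_2(\mathcal{A})$ is the Banach algebra of $2\times 2$ matrices over $\mathcal{A}$. $\mathcal{A}^{qnil}$ is the set of quasinilpotent elements ($\lim\|x^n\|^{1/n}=0$). An element $x$ of a Banach algebra has a generalized Drazin (g-Drazin) inverse $x^d$ if $x^d$ commutes with $x$, $x^d = x^dxx^d$ and $x - x^2x^d$ is quasinilpotent; $\mathcal{A}^d$ (resp. $M_2(\mathcal{A})^d$) denotes the set of g-Drazin invertible elements. The spectral idempotent is $x^\pi = 1 - xx^d$ (with $1$ the relevant identity). *)

theory Defs
  imports "HOL-Analysis.Analysis"
begin

text \<open>Isabelle's algebra classes are real; a complex Banach algebra with identity is a
 real unital Banach algebra with a compatible complex scalar multiplication.\<close>

class complex_banach_algebra_1 = real_normed_algebra_1 + banach +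
  fixes scaleC :: "complex \<Rightarrow> 'a \<Rightarrow> 'a"
  assumes scaleC_add_right: "scaleC c (x + y) = scaleC c x + scaleC c y"
    and scaleC_add_left: "scaleC (c + d) x = scaleC c x + scaleC d x"
    and scaleC_scaleC: "scaleC c (scaleC d x) = scaleC (c * d) x"
    and scaleC_one: "scaleC 1 x = x"
    and scaleR_scaleC: "scaleR r x = scaleC (complex_of_real r) x"
    and norm_scaleC: "norm (scaleC c x) = cmod c * norm x"
    and mult_scaleC_left: "scaleC c x * y = scaleC c (x * y)"
    and mult_scaleC_right: "x * scaleC c y = scaleC c (x * y)"

definition quasinilpotent :: "'a::real_normed_algebra_1 \<Rightarrow> bool" where
  "quasinilpotent x \<longleftrightarrow> (\<lambda>n. root n (norm (x ^ n))) \<longlonglongrightarrow> 0"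

definition is_gdrazin_inv :: "'a::real_normed_algebra_1 \<Rightarrow> 'a \<Rightarrow> bool" where
  "is_gdrazin_inv x y \<longleftrightarrow> y * x = x * y \<and> y = y * x * y \<and> quasinilpotent (x - x^2 * y)"

definition gdrazin_invertible :: "'a::real_normed_algebra_1 \<Rightarrow> bool" where
  "gdrazin_invertible x \<longleftrightarrow> (\<exists>y. is_gdrazin_inv x y)"

definition gd :: "'a::real_normed_algebra_1 \<Rightarrow> 'a" where
  "gd x = (THE y. is_gdrazin_inv x y)"

definition spi :: "'a::real_normed_algebra_1 \<Rightarrow> 'a" where
  "spi x = 1 - x * gd x"

text \<open>M_2(A) is modelled as \<open>'a^2^2\<close> with matrix product \<open>**\<close>, identity \<open>mat 1\<close>
 and the (complete, equivalent) product norm from HOL-Analysis.\<close>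

definition mk2 :: "'a::zero \<Rightarrow> 'a \<Rightarrow> 'a \<Rightarrow> 'a \<Rightarrow> 'a^2^2" where
  "mk2 a b c d = (\<chi> i j. if i = 1 then (if j = 1 then a else b) else (if j = 1 then c else d))"

primrec mpow :: "'a::semiring_1^2^2 \<Rightarrow> nat \<Rightarrow> 'a^2^2" where
  "mpow X 0 = mat 1"
| "mpow X (Suc n) = X ** mpow X n"

definition quasinilpotent2 :: "'a::real_normed_algebra_1^2^2 \<Rightarrow> bool" where
  "quasinilpotent2 X \<longleftrightarrow> (\<lambda>n. root n (norm (mpow X n))) \<longlonglongrightarrow> 0"

definition is_gdrazin_inv2 :: "'a::real_normed_algebra_1^2^2 \<Rightarrow> 'a^2^2 \<Rightarrow> bool" where
  "is_gdrazin_inv2 X Y \<longleftrightarrow> Y ** X = X ** Y \<and> Y = Y ** X ** Y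
     \<and> quasinilpotent2 (X - mpow X 2 ** Y)"

definition gdrazin_invertible2 :: "'a::real_normed_algebra_1^2^2 \<Rightarrow> bool" where
  "gdrazin_invertible2 X \<longleftrightarrow> (\<exists>Y. is_gdrazin_inv2 X Y)"

definition gd2 :: "'a::real_normed_algebra_1^2^2 \<Rightarrow> 'a^2^2" where
  "gd2 X = (THE Y. is_gdrazin_inv2 X Y)"

end

theory Submission
  imports Defs
begin

text \<open>Write \<open>M = P + Q\<close> with \<open>P = diag(A, D)\<close> and \<open>Q\<close> the off-diagonal part; \<open>P\<^sup>d\<close> is diagonal
  and \<open>Q\<^sup>d\<close> comes from Cline's formula \<open>(BC)\<^sup>d = B ((CB)\<^sup>d)\<^sup>2 C\<close>. In \<open>M\<^sub>2(\<A>)\<close> the two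
  hypotheses together say \<open>Q P = \<lambda> Q\<^sup>\<pi> P Q P\<^sup>\<pi>\<close>. Multiplying by the spectral idempotents gives
  \<open>Q P\<^sup>d = 0\<close>, \<open>Q\<^sup>d P = 0\<close> and \<open>Q P = \<lambda> P Q\<close>; iterating this twisted commutation against the
  quasinilpotent parts \<open>P P\<^sup>\<pi>\<close> and \<open>Q Q\<^sup>\<pi>\<close> forces \<open>P\<^sup>d Q = 0\<close> and \<open>P Q\<^sup>d = 0\<close> as well. Then
  \<open>P\<^sup>d + Q\<^sup>d\<close> is the g-Drazin inverse of \<open>M\<close>: the only nontrivial point is that
  \<open>P P\<^sup>\<pi> + Q Q\<^sup>\<pi>\<close> is quasinilpotent, which holds because the sum of two \<open>\<lambda>\<close>-commuting
  quasinilpotents is quasinilpotent (a twisted binomial expansion). Finally every term of the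
  series in the formula vanishes and its leading matrix equals \<open>P\<^sup>d + Q\<^sup>d\<close>.\<close>

section \<open>Quasinilpotent elements\<close>

lemma geometric_bound_if_root_tendsto_0:
  fixes f :: "nat \<Rightarrow> real"
  assumes nonneg: "\<And>n. f n \<ge> 0" and lim: "(\<lambda>n. root n (f n)) \<longlonglongrightarrow> 0" and \<epsilon>: "\<epsilon> > 0"
  shows "\<exists>C. \<forall>n. f n \<le> C * \<epsilon> ^ n"
proof -
  from lim \<epsilon> obtain N where N: "\<And>n. n \<ge> N \<Longrightarrow> root n (f n) < \<epsilon>"
    unfolding LIMSEQ_def dist_real_def by fastforce
  define C where "C = 1 + (\<Sum>n<Suc N. f n / \<epsilon> ^ n)"
  have C: "C \<ge> 1"
    unfolding C_def using nonneg \<epsilon> by (simp add: sum_nonneg del: sum.lessThan_Suc)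
  have "f n \<le> C * \<epsilon> ^ n" for n
  proof (cases "n \<le> N")
    case True
    have "f n / \<epsilon> ^ n \<le> (\<Sum>n<Suc N. f n / \<epsilon> ^ n)"
      by (rule member_le_sum) (use True nonneg \<epsilon> in auto)
    hence "f n / \<epsilon> ^ n \<le> C" unfolding C_def by simp
    thus ?thesis using \<epsilon> by (simp add: divide_le_eq)
  next
    case False
    hence n: "n > 0" "n \<ge> N" by auto
    have "root n (f n) ^ n \<le> \<epsilon> ^ n"
      using N[OF n(2)] real_root_ge_zero[OF nonneg] by (intro power_mono) auto
    hence "f n \<le> \<epsilon> ^ n" using real_root_pow_pos2[OF n(1) nonneg] by simp
    also have "\<dots> \<le> C * \<epsilon> ^ n" using C \<epsilon> by simp
    finally show ?thesis .
  qed
  thus ?thesis by blast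
qed

lemma root_tendsto_0_if_geometric_bound:
  fixes f :: "nat \<Rightarrow> real"
  assumes nonneg: "\<And>n. f n \<ge> 0" and bound: "\<And>\<epsilon>. \<epsilon> > 0 \<Longrightarrow> \<exists>C. \<forall>n. f n \<le> C * \<epsilon> ^ n"
  shows "(\<lambda>n. root n (f n)) \<longlonglongrightarrow> 0"
  unfolding LIMSEQ_def dist_real_def
proof (intro allI impI)
  fix r :: real assume r: "r > 0"
  obtain C where C: "\<And>n. f n \<le> C * (r/2) ^ n" using bound r by (meson half_gt_zero)
  define C' where "C' = max C 1"
  have C': "f n \<le> C' * (r/2) ^ n" for n
  proof -
    have "C * (r/2) ^ n \<le> C' * (r/2) ^ n" using r by (intro mult_right_mono) (auto simp: C'_def)
    thus ?thesis using C[of n] by linarith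
  qed
  have "(\<lambda>n. root n C') \<longlonglongrightarrow> 1" by (rule LIMSEQ_root_const) (simp add: C'_def)
  then obtain N where N: "\<And>n. n \<ge> N \<Longrightarrow> \<bar>root n C' - 1\<bar> < 1"
    unfolding LIMSEQ_def dist_real_def by (meson zero_less_one)
  have "\<bar>root n (f n) - 0\<bar> < r" if n: "n \<ge> Suc N" for n
  proof -
    have n0: "n > 0" using n by simp
    have "root n (f n) \<le> root n (C' * (r/2) ^ n)" using C' n0 by simp
    also have "\<dots> = root n C' * (r/2)" using n0 r
      by (simp add: real_root_mult real_root_power_cancel)
    also have "\<dots> < 2 * (r/2)" using N[of n] n r by (intro mult_strict_right_mono) auto
    finally show ?thesis using nonneg n0 by simp
  qed
  thus "\<exists>N. \<forall>n\<ge>N. \<bar>root n (f n) - 0\<bar> < r" by blast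
qed

lemma root_tendsto_0_iff_geometric_bound:
  fixes f :: "nat \<Rightarrow> real"
  assumes "\<And>n. f n \<ge> 0"
  shows "(\<lambda>n. root n (f n)) \<longlonglongrightarrow> 0 \<longleftrightarrow> (\<forall>\<epsilon>>0. \<exists>C. \<forall>n. f n \<le> C * \<epsilon> ^ n)"
  using geometric_bound_if_root_tendsto_0[of f] root_tendsto_0_if_geometric_bound[of f] assms
  by blast

lemma quasinilpotent_iff_geometric_bound:
  "quasinilpotent x \<longleftrightarrow> (\<forall>\<epsilon>>0. \<exists>C. \<forall>n. norm (x ^ n) \<le> C * \<epsilon> ^ n)"
  unfolding quasinilpotent_def by (rule root_tendsto_0_iff_geometric_bound) simp

lemma quasinilpotentI:
  "(\<And>\<epsilon>. \<epsilon> > 0 \<Longrightarrow> \<exists>C. \<forall>n. norm (x ^ n) \<le> C * \<epsilon> ^ n) \<Longrightarrow> quasinilpotent x"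
  unfolding quasinilpotent_iff_geometric_bound by blast

lemma quasinilpotentE:
  assumes "quasinilpotent x" "\<epsilon> > 0"
  obtains C where "C \<ge> 1" "\<And>n. norm (x ^ n) \<le> C * \<epsilon> ^ n"
proof -
  obtain C where C: "\<And>n. norm (x ^ n) \<le> C * \<epsilon> ^ n"
    using assms unfolding quasinilpotent_iff_geometric_bound by blast
  moreover have "C \<ge> 1" using C[of 0] by simp
  ultimately show thesis using that by blast
qed

lemma eq_0_if_dominated_by_quasinilpotent:
  fixes w r :: "'a::real_normed_algebra_1"
  assumes r: "quasinilpotent r" and K: "K \<ge> 0"
    and w: "\<And>m. m > 0 \<Longrightarrow> norm w \<le> B * K ^ m * norm (r ^ m)"
  shows "w = 0"
proof -
  define \<epsilon> where "\<epsilon> = 1 / (2 * (K + 1))"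
  have \<epsilon>: "\<epsilon> > 0" "K * \<epsilon> \<le> 1/2" using K by (simp_all add: \<epsilon>_def field_simps)
  obtain C where C: "C \<ge> 1" "\<And>m. norm (r ^ m) \<le> C * \<epsilon> ^ m" using quasinilpotentE[OF r \<epsilon>(1)] by blast
  have "norm w \<le> (\<bar>B\<bar> * C) * (1/2) ^ m" if "m > 0" for m
  proof -
    have "norm w \<le> B * K ^ m * norm (r ^ m)" by (rule w[OF that])
    also have "\<dots> \<le> \<bar>B\<bar> * K ^ m * norm (r ^ m)" using K by (intro mult_right_mono) auto
    also have "\<dots> \<le> \<bar>B\<bar> * K ^ m * (C * \<epsilon> ^ m)" using K by (intro mult_left_mono C(2)) auto
    also have "\<dots> = (\<bar>B\<bar> * C) * (K * \<epsilon>) ^ m" by (simp add: power_mult_distrib ac_simps)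
    also have "\<dots> \<le> (\<bar>B\<bar> * C) * (1/2) ^ m"
      using \<epsilon> K C by (intro mult_left_mono power_mono) auto
    finally show ?thesis .
  qed
  moreover have "(\<lambda>m. (\<bar>B\<bar> * C) * (1/2::real) ^ m) \<longlonglongrightarrow> (\<bar>B\<bar> * C) * 0"
    by (intro tendsto_mult tendsto_const LIMSEQ_power_zero) auto
  ultimately have "norm w \<le> (\<bar>B\<bar> * C) * 0"
    by (intro LIMSEQ_le_const[of _ _ "norm w"]) (auto intro!: exI[of _ 1])
  thus ?thesis by simp
qed

lemma power_idempotent:
  fixes e :: "'a::monoid_mult"
  assumes "e * e = e" "m > 0"
  shows "e ^ m = e"
proof -
  have "e ^ Suc k = e" for k by (induction k) (simp_all add: assms(1))
  from this[of "m - 1"] show ?thesis using assms(2) by simp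
qed

lemma quasinilpotent_idempotent_eq_0:
  fixes e :: "'a::real_normed_algebra_1"
  assumes "e * e = e" "quasinilpotent e"
  shows "e = 0"
proof (rule eq_0_if_dominated_by_quasinilpotent[OF assms(2), where K = 1 and B = 1])
  fix m :: nat assume "m > 0"
  thus "norm e \<le> 1 * 1 ^ m * norm (e ^ m)" by (simp add: power_idempotent assms(1))
qed simp

lemma power_mult_commuting:
  fixes x y :: "'a::monoid_mult"
  assumes "x * y = y * x"
  shows "(x * y) ^ n = x ^ n * y ^ n"
proof (induction n)
  case (Suc n)
  have "(x * y) ^ Suc n = x * (y * x ^ n) * y ^ n" by (simp add: Suc mult.assoc)
  also have "\<dots> = x * (x ^ n * y) * y ^ n" by (simp only: power_commuting_commutes[OF assms])
  also have "\<dots> = x ^ Suc n * y ^ Suc n" by (simp add: mult.assoc)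
  finally show ?case .
qed simp

lemma quasinilpotent_mult_commuting:
  fixes x y :: "'a::real_normed_algebra_1"
  assumes xy: "x * y = y * x" and x: "quasinilpotent x"
  shows "quasinilpotent (x * y)"
proof (rule quasinilpotentI)
  fix \<epsilon> :: real assume \<epsilon>: "\<epsilon> > 0"
  define d where "d = \<epsilon> / (norm y + 1)"
  have ny: "norm y + 1 > 0" by (smt (verit) norm_ge_zero)
  hence d: "d > 0" using \<epsilon> by (simp add: d_def)
  obtain C where C: "C \<ge> 1" "\<And>n. norm (x ^ n) \<le> C * d ^ n" using quasinilpotentE[OF x d] by blast
  have "norm ((x * y) ^ n) \<le> C * \<epsilon> ^ n" for n
  proof -
    have "norm ((x * y) ^ n) \<le> norm (x ^ n) * norm (y ^ n)"
      unfolding power_mult_commuting[OF xy] by (rule norm_mult_ineq)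
    also have "\<dots> \<le> (C * d ^ n) * (norm y + 1) ^ n"
    proof (intro mult_mono C(2))
      show "norm (y ^ n) \<le> (norm y + 1) ^ n"
        by (rule order_trans[OF norm_power_ineq]) (intro power_mono, auto)
    qed (use C d in auto)
    also have "\<dots> = C * \<epsilon> ^ n" using ny by (simp add: d_def power_divide)
    finally show ?thesis .
  qed
  thus "\<exists>C. \<forall>n. norm ((x * y) ^ n) \<le> C * \<epsilon> ^ n" by blast
qed

lemma power_Suc_mult_swap:
  fixes x y :: "'a::monoid_mult"
  shows "(y * x) ^ Suc n = y * (x * y) ^ n * x"
  by (induction n) (simp_all add: mult.assoc)

lemma quasinilpotent_mult_swap:
  fixes x y :: "'a::real_normed_algebra_1"
  assumes xy: "quasinilpotent (x * y)"
  shows "quasinilpotent (y * x)"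
proof (rule quasinilpotentI)
  fix \<epsilon> :: real assume \<epsilon>: "\<epsilon> > 0"
  obtain C where C: "C \<ge> 1" "\<And>n. norm ((x * y) ^ n) \<le> C * \<epsilon> ^ n"
    using quasinilpotentE[OF xy \<epsilon>] by blast
  define C' where "C' = C * (norm x * norm y / \<epsilon> + 1)"
  have "norm ((y * x) ^ n) \<le> C' * \<epsilon> ^ n" for n
  proof (cases n)
    case 0
    have "C * 1 \<le> C'" unfolding C'_def using C \<epsilon> by (intro mult_left_mono) auto
    thus ?thesis using 0 C by simp
  next
    case (Suc m)
    have "norm ((y * x) ^ n) \<le> norm y * norm ((x * y) ^ m) * norm x"
      unfolding Suc power_Suc_mult_swap
      by (meson norm_mult_ineq mult_right_mono norm_ge_zero order_trans)
    also have "\<dots> \<le> norm y * (C * \<epsilon> ^ m) * norm x"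
      by (intro mult_right_mono mult_left_mono C(2)) auto
    also have "\<dots> = C * (norm x * norm y / \<epsilon>) * \<epsilon> ^ n" using \<epsilon> by (simp add: Suc field_simps)
    also have "\<dots> \<le> C' * \<epsilon> ^ n" unfolding C'_def using C \<epsilon>
      by (intro mult_right_mono mult_left_mono) auto
    finally show ?thesis .
  qed
  thus "\<exists>C. \<forall>n. norm ((y * x) ^ n) \<le> C * \<epsilon> ^ n" by blast
qed

lemma quasinilpotent_of_square:
  fixes x :: "'a::real_normed_algebra_1"
  assumes "quasinilpotent (x * x)"
  shows "quasinilpotent x"
proof (rule quasinilpotentI)
  fix \<epsilon> :: real assume \<epsilon>: "\<epsilon> > 0"
  obtain C where C: "C \<ge> 1" "\<And>k. norm ((x * x) ^ k) \<le> C * (\<epsilon> ^ 2) ^ k"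
    using quasinilpotentE[OF assms, of "\<epsilon> ^ 2"] \<epsilon> by auto
  define C' where "C' = C * (1 + norm x / \<epsilon>)"
  have nx: "0 \<le> norm x / \<epsilon>" using \<epsilon> by simp
  have C_le: "C * \<epsilon> ^ n \<le> C' * \<epsilon> ^ n" for n
    unfolding C'_def using C nx \<epsilon> by (intro mult_right_mono) auto
  have even: "norm (x ^ (2 * k)) \<le> C * \<epsilon> ^ (2 * k)" for k
    using C(2)[of k] by (simp only: power_mult power2_eq_square)
  have "norm (x ^ n) \<le> C' * \<epsilon> ^ n" for n
  proof (cases "even n")
    case True
    from True obtain k where "n = 2 * k" by (rule evenE)
    hence "norm (x ^ n) \<le> C * \<epsilon> ^ n" using even[of k] by simp
    with C_le[of n] show ?thesis by linarith
  next
    case False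
    from False obtain k where n: "n = 2 * k + 1" by (rule oddE)
    have "norm (x ^ n) = norm (x * x ^ (2 * k))" by (simp add: n)
    also have "\<dots> \<le> norm x * (C * \<epsilon> ^ (2 * k))"
      by (rule order_trans[OF norm_mult_ineq]) (intro mult_left_mono even, simp)
    also have "\<dots> = C * (norm x / \<epsilon>) * \<epsilon> ^ n"
      using \<epsilon> by (simp add: n)
    also have "\<dots> \<le> C' * \<epsilon> ^ n" unfolding C'_def using C \<epsilon> nx
      by (intro mult_right_mono mult_left_mono) auto
    finally show ?thesis .
  qed
  thus "\<exists>C. \<forall>n. norm (x ^ n) \<le> C * \<epsilon> ^ n" by blast
qed

section \<open>Generalized Drazin inverses\<close>

lemma norm_mult3_le:
  fixes a b c :: "'a::real_normed_algebra"
  shows "norm (a * b * c) \<le> norm a * norm b * norm c"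
  by (meson norm_mult_ineq mult_right_mono norm_ge_zero order_trans)

lemma is_gdrazin_invD:
  assumes "is_gdrazin_inv x y"
  shows "y * x = x * y" "y * x * y = y" "quasinilpotent (x - x * x * y)"
  using assms unfolding is_gdrazin_inv_def power2_eq_square by auto

lemma is_gdrazin_inv_identities:
  fixes x y :: "'a::real_normed_algebra_1"
  assumes "is_gdrazin_inv x y"
  shows "x * y * (x * y) = x * y" "x * y * y = y" "y * (x * y) = y" "y * y * x = y"
    "(1 - x * y) * (1 - x * y) = 1 - x * y" "(1 - x * y) * x = x * (1 - x * y)"
    "x * (1 - x * y) = x - x * x * y" "quasinilpotent (x * (1 - x * y))"
proof -
  note G = is_gdrazin_invD[OF assms]
  show uu: "x * y * (x * y) = x * y" by (metis G(1,2) mult.assoc)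
  show "x * y * y = y" "y * (x * y) = y" "y * y * x = y" by (metis G(1,2) mult.assoc)+
  show "(1 - x * y) * (1 - x * y) = 1 - x * y" using uu by (simp add: algebra_simps)
  show "(1 - x * y) * x = x * (1 - x * y)" by (simp add: algebra_simps) (metis G(1) mult.assoc)
  show xp: "x * (1 - x * y) = x - x * x * y" by (simp add: algebra_simps)
  show "quasinilpotent (x * (1 - x * y))" unfolding xp by (rule G(3))
qed

lemma is_gdrazin_inv_powers:
  fixes x y :: "'a::real_normed_algebra_1"
  assumes g: "is_gdrazin_inv x y" and m: "m > 0"
  shows "x ^ m * y ^ m = x * y" "y ^ m * x ^ m = x * y"
    "(1 - x * y) * x ^ m = (x * (1 - x * y)) ^ m" "x ^ m * (1 - x * y) = (x * (1 - x * y)) ^ m"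
proof -
  note G = is_gdrazin_invD[OF g] and I = is_gdrazin_inv_identities[OF g]
  have "(x * y) ^ m = x * y" by (rule power_idempotent[OF I(1) m])
  thus "x ^ m * y ^ m = x * y" "y ^ m * x ^ m = x * y"
    using power_mult_commuting[of x y m] power_mult_commuting[of y x m] G(1) by simp_all
  have "(x * (1 - x * y)) ^ m = (1 - x * y) ^ m * x ^ m"
    unfolding I(6)[symmetric] by (rule power_mult_commuting[OF I(6)])
  also have "(1 - x * y) ^ m = 1 - x * y" by (rule power_idempotent[OF I(5) m])
  finally show "(1 - x * y) * x ^ m = (x * (1 - x * y)) ^ m" ..
  moreover have "(1 - x * y) * x ^ m = x ^ m * (1 - x * y)"
    by (rule power_commuting_commutes[OF I(6)[symmetric], symmetric])
  ultimately show "x ^ m * (1 - x * y) = (x * (1 - x * y)) ^ m" by simp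
qed

text \<open>Writing \<open>u = x y\<close>, \<open>p = 1 - u\<close>, \<open>r = x p\<close>: commutation with \<open>x\<close> gives
  \<open>p c u = r\<^sup>m c y\<^sup>m\<close> and \<open>u c p = y\<^sup>m c r\<^sup>m\<close> for all \<open>m > 0\<close>, which forces both to vanish.\<close>

lemma gdrazin_spectral_idempotent_commute:
  fixes x y c :: "'a::real_normed_algebra_1"
  assumes g: "is_gdrazin_inv x y" and cx: "c * x = x * c"
  shows "c * (x * y) = x * y * c"
proof -
  note I = is_gdrazin_inv_identities[OF g] and pow = is_gdrazin_inv_powers[OF g]
  have cx_pow: "c * x ^ m = x ^ m * c" for m
    by (rule power_commuting_commutes[OF cx[symmetric], symmetric])
  have y_pow: "norm c * norm ((x * (1 - x * y)) ^ m) * norm (y ^ m)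
      \<le> norm c * norm y ^ m * norm ((x * (1 - x * y)) ^ m)" for m
    using mult_left_mono[OF norm_power_ineq[of y m], of "norm c * norm ((x * (1 - x * y)) ^ m)"]
    by (simp add: ac_simps)
  have "(1 - x * y) * c * (x * y) = 0"
  proof (rule eq_0_if_dominated_by_quasinilpotent[OF I(8), where K = "norm y" and B = "norm c"])
    fix m :: nat assume m: "m > 0"
    have "(1 - x * y) * c * (x * y) = (1 - x * y) * (c * x ^ m) * y ^ m"
      by (simp add: pow(1)[OF m, symmetric] mult.assoc)
    also have "\<dots> = (x * (1 - x * y)) ^ m * c * y ^ m"
      by (simp only: cx_pow pow(3)[OF m, symmetric] mult.assoc)
    finally have "norm ((1 - x * y) * c * (x * y))
        \<le> norm ((x * (1 - x * y)) ^ m) * norm c * norm (y ^ m)"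
      by (simp only: norm_mult3_le)
    also have "\<dots> \<le> norm c * norm y ^ m * norm ((x * (1 - x * y)) ^ m)"
      using y_pow[of m] by (simp add: ac_simps)
    finally show "norm ((1 - x * y) * c * (x * y))
        \<le> norm c * norm y ^ m * norm ((x * (1 - x * y)) ^ m)" .
  qed simp
  moreover have "x * y * c * (1 - x * y) = 0"
  proof (rule eq_0_if_dominated_by_quasinilpotent[OF I(8), where K = "norm y" and B = "norm c"])
    fix m :: nat assume m: "m > 0"
    have "x * y * c * (1 - x * y) = y ^ m * (x ^ m * c) * (1 - x * y)"
      by (simp add: pow(2)[OF m, symmetric] mult.assoc)
    also have "\<dots> = y ^ m * c * (x * (1 - x * y)) ^ m"
      by (simp only: cx_pow[symmetric]) (simp add: pow(4)[OF m, symmetric] mult.assoc)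
    finally have "norm (x * y * c * (1 - x * y))
        \<le> norm (y ^ m) * norm c * norm ((x * (1 - x * y)) ^ m)"
      by (simp only: norm_mult3_le)
    also have "\<dots> \<le> norm c * norm y ^ m * norm ((x * (1 - x * y)) ^ m)"
      using y_pow[of m] by (simp add: ac_simps)
    finally show "norm (x * y * c * (1 - x * y))
        \<le> norm c * norm y ^ m * norm ((x * (1 - x * y)) ^ m)" .
  qed simp
  ultimately show ?thesis using I(1) by (simp add: algebra_simps)
qed

lemma gdrazin_inv_commute:
  fixes x y c :: "'a::real_normed_algebra_1"
  assumes g: "is_gdrazin_inv x y" and cx: "c * x = x * c"
  shows "c * y = y * c"
proof -
  note G = is_gdrazin_invD[OF g] and I = is_gdrazin_inv_identities[OF g]
  note cu = gdrazin_spectral_idempotent_commute[OF g cx]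
  have "y * c = y * (x * y) * c" by (simp only: I(3))
  also have "\<dots> = y * c * x * y" by (simp only: mult.assoc cu)
  also have "\<dots> = x * y * c * y" by (simp only: mult.assoc cx G(1)[symmetric])
  also have "\<dots> = c * (x * y) * y" by (simp only: cu)
  also have "\<dots> = c * (x * y * y)" by (simp only: mult.assoc)
  also have "\<dots> = c * y" by (simp only: I(2))
  finally show ?thesis by (rule sym)
qed

lemma idempotent_mult_complement:
  fixes e f :: "'a::ring_1"
  assumes "e * e = e" "f * f = f" "e * f = f * e"
  shows "(e * (1 - f)) * (e * (1 - f)) = e * (1 - f)"
proof -
  have ef: "(1 - f) * e = e * (1 - f)" using assms(3) by (simp add: algebra_simps)
  have ff: "(1 - f) * (1 - f) = 1 - f" using assms(2) by (simp add: algebra_simps)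
  have "(e * (1 - f)) * (e * (1 - f)) = e * ((1 - f) * e) * (1 - f)" by (simp only: mult.assoc)
  also have "\<dots> = (e * e) * ((1 - f) * (1 - f))" by (simp only: ef mult.assoc)
  finally show ?thesis by (simp only: assms(1) ff)
qed

lemma commute_with_mult:
  fixes a b c :: "'a::semigroup_mult"
  assumes "a * b = b * a" "a * c = c * a"
  shows "a * (b * c) = b * c * a"
  by (metis assms mult.assoc)

text \<open>\<open>x y (1 - x z)\<close> is an idempotent which is also \<open>y\<close> times the quasinilpotent part of \<open>x\<close>.\<close>

lemma gdrazin_spectral_idempotent_absorb:
  fixes x y z :: "'a::real_normed_algebra_1"
  assumes gy: "is_gdrazin_inv x y" and gz: "is_gdrazin_inv x z"
    and comm: "x * y * (x * z) = x * z * (x * y)" and y_xz: "y * (x * z) = x * z * y"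
  shows "x * y * (1 - x * z) = 0"
proof (rule quasinilpotent_idempotent_eq_0)
  note Gy = is_gdrazin_invD[OF gy] and Iy = is_gdrazin_inv_identities[OF gy]
  note Iz = is_gdrazin_inv_identities[OF gz]
  show "x * y * (1 - x * z) * (x * y * (1 - x * z)) = x * y * (1 - x * z)"
    by (rule idempotent_mult_complement[OF Iy(1) Iz(1) comm])
  have "y * (1 - x * z) = (1 - x * z) * y" using y_xz by (simp add: algebra_simps)
  hence yr: "y * (x * (1 - x * z)) = x * (1 - x * z) * y"
    by (rule commute_with_mult[OF Gy(1)])
  have "x * y * (1 - x * z) = x * (1 - x * z) * y"
    unfolding yr[symmetric] Gy(1)[symmetric] by (simp only: mult.assoc)
  thus "quasinilpotent (x * y * (1 - x * z))"
    using quasinilpotent_mult_commuting[OF yr[symmetric] Iz(8)] by simp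
qed

lemma gdrazin_inv_unique:
  fixes x y z :: "'a::real_normed_algebra_1"
  assumes gy: "is_gdrazin_inv x y" and gz: "is_gdrazin_inv x z"
  shows "y = z"
proof -
  note Gy = is_gdrazin_invD[OF gy] and Iy = is_gdrazin_inv_identities[OF gy]
  note Gz = is_gdrazin_invD[OF gz] and Iz = is_gdrazin_inv_identities[OF gz]
  have zy: "z * y = y * z" by (rule gdrazin_inv_commute[OF gy]) (use Gz in simp)
  have y_xz: "y * (x * z) = x * z * y" by (rule commute_with_mult[OF Gy(1) zy[symmetric]])
  have z_xy: "z * (x * y) = x * y * z" by (rule commute_with_mult[OF Gz(1) zy])
  have comm: "x * z * (x * y) = x * y * (x * z)"
    by (rule commute_with_mult) (simp_all add: Gz(1) y_xz mult.assoc flip: mult.assoc[of x z x])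
  have "x * y = x * y * (x * z)"
    using gdrazin_spectral_idempotent_absorb[OF gy gz comm[symmetric] y_xz]
    by (simp add: right_diff_distrib)
  also have "\<dots> = x * z"
    using gdrazin_spectral_idempotent_absorb[OF gz gy comm z_xy] comm
    by (simp add: right_diff_distrib)
  finally have xy: "x * y = x * z" .
  have "y = x * y * y" using Iy(2) by simp
  also have "\<dots> = x * z * y" by (simp only: xy)
  also have "\<dots> = z * (x * y)" by (simp only: mult.assoc[symmetric] Gz(1))
  also have "\<dots> = z" unfolding xy by (rule Iz(3))
  finally show ?thesis .
qed

lemma gd_eqI: "is_gdrazin_inv x y \<Longrightarrow> gd x = y"
  unfolding gd_def by (rule the_equality) (auto intro: gdrazin_inv_unique)

lemma is_gdrazin_inv_gd: "gdrazin_invertible x \<Longrightarrow> is_gdrazin_inv x (gd x)"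
  unfolding gdrazin_invertible_def using gd_eqI by metis

lemma is_gdrazin_inv_cline:
  fixes b c y :: "'a::real_normed_algebra_1"
  assumes g: "is_gdrazin_inv (c * b) y"
  shows "is_gdrazin_inv (b * c) (b * y * y * c)"
proof -
  note G = is_gdrazin_invD[OF g] and I = is_gdrazin_inv_identities[OF g]
  have "b * y * y * c * (b * c) = b * (y * y * (c * b)) * c" by (simp add: mult.assoc)
  also have "\<dots> = b * ((c * b) * y * y) * c" using I(4) I(2) by simp
  also have "\<dots> = b * c * (b * y * y * c)" by (simp add: mult.assoc)
  finally have comm: "b * y * y * c * (b * c) = b * c * (b * y * y * c)" .
  have "b * y * y * c * (b * c) * (b * y * y * c) = b * (y * y * (c * b)) * ((c * b) * y) * y * c"
    by (simp only: mult.assoc)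
  also have "\<dots> = b * (y * (c * b) * y) * y * c" unfolding I(4) by (simp only: mult.assoc)
  finally have inv: "b * y * y * c * (b * c) * (b * y * y * c) = b * y * y * c" by (simp only: G(2))
  define p where "p = 1 - c * b * y"
  have "b * c * (b * c) * (b * y * y * c) = b * ((c * b) * (c * b) * y * y) * c"
    by (simp add: mult.assoc)
  also have "(c * b) * (c * b) * y * y = c * b * y" using I(2) by (metis mult.assoc)
  finally have part: "b * c - b * c * (b * c) * (b * y * y * c) = b * (p * c)"
    unfolding p_def by (simp add: algebra_simps)
  have "p * c * b = c * b * (1 - c * b * y)"
    unfolding p_def using I(6) by (simp add: mult.assoc)
  hence "quasinilpotent (p * c * b)" using I(8) by simp
  hence "quasinilpotent (b * (p * c))" by (rule quasinilpotent_mult_swap)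
  thus ?thesis unfolding is_gdrazin_inv_def power2_eq_square part
    using comm inv by simp
qed

section \<open>Twisted commutation \<open>z x = \<mu> x z\<close>\<close>

lemma scaleC_zero_right [simp]: "scaleC c (0::'a::complex_banach_algebra_1) = 0"
  by (metis add_cancel_right_right scaleC_add_right)

lemma scaleC_zero_left [simp]: "scaleC 0 (x::'a::complex_banach_algebra_1) = 0"
  by (metis add_cancel_right_right add_0 scaleC_add_left)

lemma mult_power_scaled_commute:
  fixes x z :: "'a::complex_banach_algebra_1"
  assumes zx: "z * x = scaleC \<mu> (x * z)"
  shows "z * x ^ k = scaleC (\<mu> ^ k) (x ^ k * z)"
proof (induction k)
  case (Suc k)
  have "z * x ^ Suc k = scaleC \<mu> (x * (z * x ^ k))" by (simp add: zx mult_scaleC_left flip: mult.assoc)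
  also have "\<dots> = scaleC (\<mu> ^ Suc k) (x ^ Suc k * z)"
    by (simp add: Suc mult_scaleC_right scaleC_scaleC mult.assoc)
  finally show ?case .
qed (simp add: scaleC_one)

lemma power_add_scaled_commute:
  fixes x z :: "'a::complex_banach_algebra_1"
  assumes zx: "z * x = scaleC \<mu> (x * z)" and \<mu>: "cmod \<mu> \<le> 1"
  shows "\<exists>a. (x + z) ^ n = (\<Sum>k\<le>n. scaleC (a k) (x ^ k * z ^ (n - k)))
              \<and> (\<forall>k\<le>n. cmod (a k) \<le> real (n choose k))"
proof (induction n)
  case 0
  show ?case by (rule exI[of _ "\<lambda>_. 1"]) (simp add: scaleC_one)
next
  case (Suc n)
  then obtain a where E: "(x + z) ^ n = (\<Sum>k\<le>n. scaleC (a k) (x ^ k * z ^ (n - k)))"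
    and B: "\<forall>k\<le>n. cmod (a k) \<le> real (n choose k)" by blast
  define a' where
    "a' k = (if k = 0 then 0 else a (k - 1)) + (if k \<le> n then \<mu> ^ k * a k else 0)" for k
  have "(x + z) ^ Suc n = x * (x + z) ^ n + z * (x + z) ^ n" by (simp add: distrib_right)
  also have "x * (x + z) ^ n = (\<Sum>k\<le>n. scaleC (a k) (x ^ Suc k * z ^ (n - k)))"
    unfolding E by (simp add: sum_distrib_left mult_scaleC_right mult.assoc)
  also have "z * (x + z) ^ n = (\<Sum>k\<le>n. scaleC (\<mu> ^ k * a k) (x ^ k * z ^ Suc (n - k)))"
    unfolding E
    by (simp add: sum_distrib_left mult_scaleC_right scaleC_scaleC mult_power_scaled_commute[OF zx]
        mult_scaleC_left flip: mult.assoc) (simp add: mult.assoc mult.commute)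
  also have "(\<Sum>k\<le>n. scaleC (a k) (x ^ Suc k * z ^ (n - k)))
      + (\<Sum>k\<le>n. scaleC (\<mu> ^ k * a k) (x ^ k * z ^ Suc (n - k)))
      = (\<Sum>k\<le>Suc n. scaleC (a' k) (x ^ k * z ^ (Suc n - k)))"
  proof -
    have s1: "(\<Sum>k\<le>Suc n. scaleC (if k = 0 then 0 else a (k - 1)) (x ^ k * z ^ (Suc n - k)))
        = (\<Sum>k\<le>n. scaleC (a k) (x ^ Suc k * z ^ (n - k)))"
      by (subst sum.atMost_Suc_shift) simp
    have s2: "(\<Sum>k\<le>Suc n. scaleC (if k \<le> n then \<mu> ^ k * a k else 0) (x ^ k * z ^ (Suc n - k)))
        = (\<Sum>k\<le>n. scaleC (\<mu> ^ k * a k) (x ^ k * z ^ Suc (n - k)))"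
      by (simp add: Suc_diff_le)
    show ?thesis unfolding a'_def scaleC_add_left sum.distrib s1 s2 ..
  qed
  finally have E': "(x + z) ^ Suc n = (\<Sum>k\<le>Suc n. scaleC (a' k) (x ^ k * z ^ (Suc n - k)))" .
  have B': "cmod (a' k) \<le> real (Suc n choose k)" if "k \<le> Suc n" for k
  proof (cases k)
    case 0 thus ?thesis using B[rule_format, of 0] by (simp add: a'_def)
  next
    case (Suc j)
    have "cmod (a' k) \<le> cmod (a j) + (if Suc j \<le> n then cmod (\<mu> ^ Suc j * a (Suc j)) else 0)"
      unfolding a'_def Suc by (auto intro: norm_triangle_ineq)
    also have "\<dots> \<le> real (n choose j) + real (n choose Suc j)"
    proof -
      have "cmod (a j) \<le> real (n choose j)" using B that Suc by auto
      moreover have "(if Suc j \<le> n then cmod (\<mu> ^ Suc j * a (Suc j)) else 0) \<le> real (n choose Suc j)"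
      proof (cases "Suc j \<le> n")
        case True
        have "cmod (\<mu> ^ Suc j * a (Suc j)) = cmod \<mu> ^ Suc j * cmod (a (Suc j))"
          by (simp add: norm_mult norm_power)
        also have "\<dots> \<le> 1 * cmod (a (Suc j))" by (intro mult_right_mono power_le_one) (use \<mu> in auto)
        also have "\<dots> \<le> real (n choose Suc j)" using B True by auto
        finally show ?thesis using True by simp
      qed simp
      ultimately show ?thesis by linarith
    qed
    also have "\<dots> = real (Suc n choose k)" unfolding Suc by simp
    finally show ?thesis .
  qed
  show ?case using E' B' by blast
qed

lemma quasinilpotent_add_scaled_commute_le_1:
  fixes x z :: "'a::complex_banach_algebra_1"
  assumes zx: "z * x = scaleC \<mu> (x * z)" and \<mu>: "cmod \<mu> \<le> 1"
    and x: "quasinilpotent x" and z: "quasinilpotent z"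
  shows "quasinilpotent (x + z)"
proof (rule quasinilpotentI)
  fix \<epsilon> :: real assume \<epsilon>: "\<epsilon> > 0"
  obtain C1 where C1: "C1 \<ge> 1" "\<And>n. norm (x ^ n) \<le> C1 * (\<epsilon>/2) ^ n"
    using quasinilpotentE[OF x, of "\<epsilon>/2"] \<epsilon> by auto
  obtain C2 where C2: "C2 \<ge> 1" "\<And>n. norm (z ^ n) \<le> C2 * (\<epsilon>/2) ^ n"
    using quasinilpotentE[OF z, of "\<epsilon>/2"] \<epsilon> by auto
  have "norm ((x + z) ^ n) \<le> (C1 * C2) * \<epsilon> ^ n" for n
  proof -
    obtain a where E: "(x + z) ^ n = (\<Sum>k\<le>n. scaleC (a k) (x ^ k * z ^ (n - k)))"
      and B: "\<forall>k\<le>n. cmod (a k) \<le> real (n choose k)"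
      using power_add_scaled_commute[OF zx \<mu>] by blast
    have "norm ((x + z) ^ n) \<le> (\<Sum>k\<le>n. norm (scaleC (a k) (x ^ k * z ^ (n - k))))"
      unfolding E by (rule norm_sum)
    also have "\<dots> \<le> (\<Sum>k\<le>n. real (n choose k) * ((C1 * C2) * ((\<epsilon>/2) ^ k * (\<epsilon>/2) ^ (n - k))))"
    proof (rule sum_mono)
      fix k assume k: "k \<in> {..n}"
      have "norm (scaleC (a k) (x ^ k * z ^ (n - k))) = cmod (a k) * norm (x ^ k * z ^ (n - k))"
        by (simp add: norm_scaleC)
      also have "\<dots> \<le> real (n choose k) * (norm (x ^ k) * norm (z ^ (n - k)))"
        using B k by (intro mult_mono norm_mult_ineq) auto
      also have "\<dots> \<le> real (n choose k) * ((C1 * (\<epsilon>/2) ^ k) * (C2 * (\<epsilon>/2) ^ (n - k)))"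
        using \<epsilon> C1 C2 by (intro mult_left_mono mult_mono) auto
      finally show "norm (scaleC (a k) (x ^ k * z ^ (n - k)))
          \<le> real (n choose k) * ((C1 * C2) * ((\<epsilon>/2) ^ k * (\<epsilon>/2) ^ (n - k)))"
        by (simp add: ac_simps)
    qed
    also have "\<dots> = (C1 * C2) * (\<Sum>k\<le>n. real (n choose k) * (\<epsilon>/2) ^ k * (\<epsilon>/2) ^ (n - k))"
      by (simp add: sum_distrib_left ac_simps)
    also have "(\<Sum>k\<le>n. real (n choose k) * (\<epsilon>/2) ^ k * (\<epsilon>/2) ^ (n - k)) = (\<epsilon>/2 + \<epsilon>/2) ^ n"
      by (rule binomial_ring[symmetric])
    finally show ?thesis by simp
  qed
  thus "\<exists>C. \<forall>n. norm ((x + z) ^ n) \<le> C * \<epsilon> ^ n" by blast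
qed

lemma quasinilpotent_add_scaled_commute:
  fixes x z :: "'a::complex_banach_algebra_1"
  assumes zx: "z * x = scaleC \<mu> (x * z)" and \<mu>: "\<mu> \<noteq> 0"
    and x: "quasinilpotent x" and z: "quasinilpotent z"
  shows "quasinilpotent (x + z)"
proof (cases "cmod \<mu> \<le> 1")
  case True thus ?thesis by (rule quasinilpotent_add_scaled_commute_le_1[OF zx _ x z])
next
  case False
  have xz: "x * z = scaleC (1/\<mu>) (z * x)" using \<mu> by (simp add: zx scaleC_scaleC scaleC_one)
  have "cmod (1/\<mu>) \<le> 1" using False by (simp add: norm_divide divide_le_eq)
  from quasinilpotent_add_scaled_commute_le_1[OF xz this z x] show ?thesis by (simp add: add.commute)
qed

lemma scaled_sandwich_power:
  fixes w s t :: "'a::complex_banach_algebra_1"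
  assumes w: "w = scaleC c (s * w * t)"
  shows "w = scaleC (c ^ n) (s ^ n * w * t ^ n)"
proof (induction n)
  case (Suc n)
  have sc: "s ^ n * (s * v) = s * (s ^ n * v)" for v
    by (simp only: mult.assoc[symmetric] power_commutes)
  have "w = scaleC (c ^ n) (s ^ n * scaleC c (s * w * t) * t ^ n)" using Suc w by simp
  also have "\<dots> = scaleC (c ^ Suc n) (s ^ Suc n * w * t ^ Suc n)"
    by (simp add: mult_scaleC_left mult_scaleC_right scaleC_scaleC mult.assoc sc mult.commute[of "c ^ n" c])
  finally show ?case .
qed (simp add: scaleC_one)

lemma scaled_sandwich_eq_0_right:
  fixes w s t r :: "'a::complex_banach_algebra_1"
  assumes w: "w = scaleC c (s * w * t)" and t: "\<And>n. w * t ^ n = w * r ^ n"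
    and r: "quasinilpotent r"
  shows "w = 0"
proof (rule eq_0_if_dominated_by_quasinilpotent[OF r, where K = "cmod c * norm s" and B = "norm w"])
  fix m :: nat
  have "norm w = norm (scaleC (c ^ m) (s ^ m * w * r ^ m))"
    using scaled_sandwich_power[OF w, of m] t[of m] by (simp add: mult.assoc)
  also have "\<dots> \<le> cmod c ^ m * (norm s ^ m * norm w * norm (r ^ m))"
    unfolding norm_scaleC norm_power
    by (intro mult_left_mono order_trans[OF norm_mult3_le] mult_right_mono norm_power_ineq) auto
  also have "\<dots> = norm w * (cmod c * norm s) ^ m * norm (r ^ m)"
    by (simp add: power_mult_distrib ac_simps)
  finally show "norm w \<le> norm w * (cmod c * norm s) ^ m * norm (r ^ m)" .
qed simp

lemma scaled_sandwich_eq_0_left: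
  fixes w s t r :: "'a::complex_banach_algebra_1"
  assumes w: "w = scaleC c (s * w * t)" and s: "\<And>n. s ^ n * w = r ^ n * w"
    and r: "quasinilpotent r"
  shows "w = 0"
proof (rule eq_0_if_dominated_by_quasinilpotent[OF r, where K = "cmod c * norm t" and B = "norm w"])
  fix m :: nat
  have "norm w = norm (scaleC (c ^ m) (r ^ m * w * t ^ m))"
    using scaled_sandwich_power[OF w, of m] s[of m] by simp
  also have "\<dots> \<le> cmod c ^ m * (norm (r ^ m) * norm w * norm t ^ m)"
    unfolding norm_scaleC norm_power
    by (intro mult_left_mono order_trans[OF norm_mult3_le] mult_left_mono norm_power_ineq)
      (auto intro: mult_nonneg_nonneg)
  also have "\<dots> = norm w * (cmod c * norm t) ^ m * norm (r ^ m)"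
    by (simp add: power_mult_distrib ac_simps)
  finally show "norm w \<le> norm w * (cmod c * norm t) ^ m * norm (r ^ m)" .
qed simp

context
  fixes P Q a b :: "'a::complex_banach_algebra_1" and lam :: complex
  assumes gP: "is_gdrazin_inv P a" and gQ: "is_gdrazin_inv Q b"
    and spectral: "Q * P = scaleC lam ((1 - Q * b) * P * Q * (1 - P * a))"
begin

lemma spectral_condition_scaled_commute:
  shows "Q * P = scaleC lam (P * Q)" and "Q * a = 0" and "b * P = 0"
proof -
  note GP = is_gdrazin_invD[OF gP] and IP = is_gdrazin_inv_identities[OF gP]
  note GQ = is_gdrazin_invD[OF gQ] and IQ = is_gdrazin_inv_identities[OF gQ]
  have "(1 - P * a) * (P * a) = 0" "(Q * b) * (1 - Q * b) = 0"
    using IP(1) IQ(1) by (simp_all add: algebra_simps)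
  moreover have "Q * P * (P * a) = scaleC lam ((1 - Q * b) * P * Q * ((1 - P * a) * (P * a)))"
    by (subst spectral) (simp add: mult_scaleC_left mult.assoc)
  moreover have "Q * b * (Q * P) = scaleC lam ((Q * b * (1 - Q * b)) * P * Q * (1 - P * a))"
    by (subst spectral) (simp add: mult_scaleC_right mult.assoc)
  ultimately have QPPa: "Q * P * (P * a) = 0" and QbQP: "Q * b * (Q * P) = 0" by simp_all
  have "Q * a = Q * (P * (P * a * a) * a)" using IP(2) by simp
  also have "\<dots> = Q * P * (P * a) * a * a" by (simp only: mult.assoc)
  finally show Qa: "Q * a = 0" using QPPa by simp
  have "Q * b * P = b * Q * P" by (simp only: GQ(1))
  also have "\<dots> = b * (Q * b) * Q * P" by (simp only: IQ(3))
  also have "\<dots> = b * (Q * b * (Q * P))" by (simp only: mult.assoc)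
  finally have QbP: "Q * b * P = 0" using QbQP by simp
  have "b * P = b * (Q * b) * P" by (simp only: IQ(3))
  thus bP: "b * P = 0" using QbP by (simp add: mult.assoc)
  have "Q * (P * a) = 0" by (simp only: GP(1)[symmetric] mult.assoc[symmetric] Qa mult_zero_left)
  hence "Q * (1 - P * a) = Q" by (simp add: right_diff_distrib)
  moreover have "(1 - Q * b) * P = P" using bP by (simp add: left_diff_distrib mult.assoc)
  ultimately show "Q * P = scaleC lam (P * Q)"
    using spectral by (simp add: mult.assoc)
qed

text \<open>Iterating \<open>P Q = \<lambda>\<inverse> Q P\<close> pushes powers of \<open>P\<close> past \<open>a Q\<close>; on \<open>a Q\<close> these powers agree
  with those of the quasinilpotent part \<open>P (1 - P a)\<close>, since \<open>Q (1 - P a) = Q\<close>.\<close>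

lemma spectral_condition_gd_mult_eq_0:
  assumes lam: "lam \<noteq> 0"
  shows "a * Q = 0"
proof (rule scaled_sandwich_eq_0_right)
  note GP = is_gdrazin_invD[OF gP] and IP = is_gdrazin_inv_identities[OF gP]
  note S = spectral_condition_scaled_commute
  show "quasinilpotent (P * (1 - P * a))" by (rule IP(8))
  have PQ: "P * Q = scaleC (1 / lam) (Q * P)" using lam by (simp add: S(1) scaleC_scaleC scaleC_one)
  have "a * Q = a * (P * a) * Q" by (simp only: IP(3))
  also have "\<dots> = a * a * (P * Q)" by (simp only: GP(1)[symmetric] mult.assoc)
  also have "\<dots> = scaleC (1 / lam) (a * (a * Q) * P)"
    unfolding PQ by (simp add: mult_scaleC_right mult.assoc)
  finally show "a * Q = scaleC (1 / lam) (a * (a * Q) * P)" .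
  fix n
  have "Q * (P * a) = 0" by (simp only: GP(1)[symmetric] mult.assoc[symmetric] S(2) mult_zero_left)
  hence "Q * (1 - P * a) = Q" by (simp add: right_diff_distrib)
  hence "Q * (1 - P * a) ^ n = Q" by (induction n) (simp_all flip: mult.assoc)
  hence Qpn: "a * Q * (1 - P * a) ^ n = a * Q" by (simp add: mult.assoc)
  have "(P * (1 - P * a)) ^ n = (1 - P * a) ^ n * P ^ n"
    unfolding IP(6)[symmetric] by (rule power_mult_commuting[OF IP(6)])
  thus "a * Q * P ^ n = a * Q * (P * (1 - P * a)) ^ n"
    by (simp only: mult.assoc[symmetric] Qpn)
qed

lemma spectral_condition_mult_gd_eq_0:
  assumes lam: "lam \<noteq> 0"
  shows "P * b = 0"
proof (rule scaled_sandwich_eq_0_left)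
  note GQ = is_gdrazin_invD[OF gQ] and IQ = is_gdrazin_inv_identities[OF gQ]
  note S = spectral_condition_scaled_commute
  show "quasinilpotent (Q * (1 - Q * b))" by (rule IQ(8))
  have PQ: "P * Q = scaleC (1 / lam) (Q * P)" using lam by (simp add: S(1) scaleC_scaleC scaleC_one)
  have "P * b = P * (Q * b * b)" by (simp only: IQ(2))
  also have "\<dots> = (P * Q) * b * b" by (simp only: mult.assoc)
  also have "\<dots> = scaleC (1 / lam) (Q * (P * b) * b)"
    unfolding PQ by (simp add: mult_scaleC_left mult.assoc)
  finally show "P * b = scaleC (1 / lam) (Q * (P * b) * b)" .
  fix n
  have "(1 - Q * b) * P = P" using S(3) by (simp add: left_diff_distrib mult.assoc)
  hence "(1 - Q * b) ^ n * P = P" by (induction n) (simp_all add: mult.assoc)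
  hence qPn: "(1 - Q * b) ^ n * (P * b) = P * b" by (simp flip: mult.assoc)
  have "(Q * (1 - Q * b)) ^ n = Q ^ n * (1 - Q * b) ^ n"
    by (rule power_mult_commuting[OF IQ(6)[symmetric]])
  thus "Q ^ n * (P * b) = (Q * (1 - Q * b)) ^ n * (P * b)"
    by (simp only: mult.assoc qPn)
qed

end

lemma quasinilpotent_parts_add_scaled_commute:
  fixes P Q a b :: "'a::complex_banach_algebra_1"
  assumes lam: "lam \<noteq> 0" and gP: "is_gdrazin_inv P a" and gQ: "is_gdrazin_inv Q b"
    and QP: "Q * P = scaleC lam (P * Q)"
    and aQ: "a * Q = 0" and Qa: "Q * a = 0" and Pb: "P * b = 0" and bP: "b * P = 0"
  shows "quasinilpotent (P * (1 - P * a) + Q * (1 - Q * b))"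
proof (rule quasinilpotent_add_scaled_commute[OF _ lam])
  note GP = is_gdrazin_invD[OF gP] and IP = is_gdrazin_inv_identities[OF gP]
  note GQ = is_gdrazin_invD[OF gQ] and IQ = is_gdrazin_inv_identities[OF gQ]
  have qP: "(1 - Q * b) * P = P" using bP by (simp add: left_diff_distrib mult.assoc)
  have Qp: "Q * (1 - P * a) = Q"
    using Qa by (simp add: right_diff_distrib GP(1)[symmetric] flip: mult.assoc)
  have pQ: "(1 - P * a) * Q = Q" using aQ by (simp add: left_diff_distrib mult.assoc)
  have Pq: "P * (1 - Q * b) = P"
    using Pb by (simp add: right_diff_distrib GQ(1)[symmetric] flip: mult.assoc)
  have "P * Q = P * ((1 - Q * b) * Q)" by (simp only: Pq mult.assoc[symmetric])
  also have "\<dots> = P * ((1 - P * a) * Q) * (1 - Q * b)" by (simp only: pQ IQ(6) mult.assoc)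
  finally have PQ: "P * Q = P * (1 - P * a) * (Q * (1 - Q * b))" by (simp only: mult.assoc)
  have "Q * (1 - Q * b) * (P * (1 - P * a)) = Q * ((1 - Q * b) * P) * (1 - P * a)"
    by (simp only: mult.assoc)
  also have "\<dots> = Q * ((1 - P * a) * P)" by (simp only: qP IP(6) mult.assoc)
  also have "\<dots> = Q * P" by (simp only: Qp mult.assoc[symmetric])
  finally show "Q * (1 - Q * b) * (P * (1 - P * a))
      = scaleC lam (P * (1 - P * a) * (Q * (1 - Q * b)))" by (simp only: QP PQ)
  show "quasinilpotent (P * (1 - P * a))" "quasinilpotent (Q * (1 - Q * b))"
    by (fact IP(8), fact IQ(8))
qed

lemma is_gdrazin_inv_add_scaled_commute:
  fixes P Q a b :: "'a::complex_banach_algebra_1"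
  assumes "lam \<noteq> 0" and gP: "is_gdrazin_inv P a" and gQ: "is_gdrazin_inv Q b"
    and "Q * P = scaleC lam (P * Q)"
    and aQ: "a * Q = 0" and Qa: "Q * a = 0" and Pb: "P * b = 0" and bP: "b * P = 0"
  shows "is_gdrazin_inv (P + Q) (a + b)"
proof -
  note GP = is_gdrazin_invD[OF gP] and IP = is_gdrazin_inv_identities[OF gP]
  note GQ = is_gdrazin_invD[OF gQ] and IQ = is_gdrazin_inv_identities[OF gQ]
  have MY: "(P + Q) * (a + b) = P * a + Q * b"
    using Pb Qa by (simp add: algebra_simps)
  have YM: "(a + b) * (P + Q) = P * a + Q * b"
    using aQ bP GP(1) GQ(1) by (simp add: algebra_simps)
  have "(a + b) * (P + Q) * (a + b) = P * a * a + P * a * b + Q * b * a + Q * b * b"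
    unfolding YM by (simp add: algebra_simps)
  also have "\<dots> = a + b"
    using IP(2) IQ(2) Pb Qa by (simp add: GP(1)[symmetric] GQ(1)[symmetric] mult.assoc)
  finally have YMY: "(a + b) * (P + Q) * (a + b) = a + b" .
  have QPa: "Q * (P * a) = 0" by (simp add: GP(1)[symmetric] Qa flip: mult.assoc)
  have PQb: "P * (Q * b) = 0" by (simp add: GQ(1)[symmetric] Pb flip: mult.assoc)
  have "(P + Q) * (P + Q) * (a + b) = P * (P * a) + P * (Q * b) + Q * (P * a) + Q * (Q * b)"
    unfolding mult.assoc[of "P + Q"] MY by (simp add: algebra_simps)
  hence "(P + Q) - (P + Q) * (P + Q) * (a + b) = P * (1 - P * a) + Q * (1 - Q * b)"
    using PQb QPa by (simp add: algebra_simps)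
  with quasinilpotent_parts_add_scaled_commute[OF assms] show ?thesis
    unfolding is_gdrazin_inv_def power2_eq_square using YM MY YMY by simp
qed

section \<open>The Banach algebra \<open>M\<^sub>2(\<A>)\<close>\<close>

text \<open>The matrix type \<open>'a^2^2\<close> of the statement has no ring structure, so the algebra is carried
  out in a datatype of \<open>2 \<times> 2\<close> matrices with the row-sum norm and transferred along \<open>vec_of_m2\<close>;
  quasinilpotence does not depend on the choice of equivalent norm.\<close>

datatype 'a m2 = M2 (e11: 'a) (e12: 'a) (e21: 'a) (e22: 'a)

lemma m2_eqI: "e11 x = e11 y \<Longrightarrow> e12 x = e12 y \<Longrightarrow> e21 x = e21 y \<Longrightarrow> e22 x = e22 y \<Longrightarrow> x = y"
  by (cases x; cases y) auto

instantiation m2 :: (zero) zero begin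
definition "0 = M2 0 0 0 0"
instance ..
end

instantiation m2 :: ("{zero,one}") one begin
definition "1 = M2 1 0 0 1"
instance ..
end

instantiation m2 :: (plus) plus begin
definition "x + y = M2 (e11 x + e11 y) (e12 x + e12 y) (e21 x + e21 y) (e22 x + e22 y)"
instance ..
end

instantiation m2 :: (minus) minus begin
definition "x - y = M2 (e11 x - e11 y) (e12 x - e12 y) (e21 x - e21 y) (e22 x - e22 y)"
instance ..
end

instantiation m2 :: (uminus) uminus begin
definition "- x = M2 (- e11 x) (- e12 x) (- e21 x) (- e22 x)"
instance ..
end

instantiation m2 :: ("{plus,times}") times begin
definition "x * y = M2 (e11 x * e11 y + e12 x * e21 y) (e11 x * e12 y + e12 x * e22 y)
                       (e21 x * e11 y + e22 x * e21 y) (e21 x * e12 y + e22 x * e22 y)"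
instance ..
end

lemma m2_sel_zero[simp]: "e11 0 = 0" "e12 0 = 0" "e21 0 = 0" "e22 0 = 0"
  by (simp_all add: zero_m2_def)
lemma m2_sel_one[simp]: "e11 1 = 1" "e12 1 = 0" "e21 1 = 0" "e22 1 = 1"
  by (simp_all add: one_m2_def)
lemma m2_sel_plus[simp]:
  "e11 (x + y) = e11 x + e11 y" "e12 (x + y) = e12 x + e12 y"
  "e21 (x + y) = e21 x + e21 y" "e22 (x + y) = e22 x + e22 y"
  by (simp_all add: plus_m2_def)
lemma m2_sel_minus[simp]:
  "e11 (x - y) = e11 x - e11 y" "e12 (x - y) = e12 x - e12 y"
  "e21 (x - y) = e21 x - e21 y" "e22 (x - y) = e22 x - e22 y"
  by (simp_all add: minus_m2_def)
lemma m2_sel_uminus[simp]: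
  "e11 (- x) = - e11 x" "e12 (- x) = - e12 x" "e21 (- x) = - e21 x" "e22 (- x) = - e22 x"
  by (simp_all add: uminus_m2_def)
lemma m2_sel_times[simp]:
  "e11 (x * y) = e11 x * e11 y + e12 x * e21 y" "e12 (x * y) = e11 x * e12 y + e12 x * e22 y"
  "e21 (x * y) = e21 x * e11 y + e22 x * e21 y" "e22 (x * y) = e21 x * e12 y + e22 x * e22 y"
  by (simp_all add: times_m2_def)

instance m2 :: (ab_group_add) ab_group_add
proof
  fix a b c :: "'a m2"
  show "a + b + c = a + (b + c)" by (rule m2_eqI) (simp_all add: add.assoc)
  show "a + b = b + a" by (rule m2_eqI) (simp_all add: add.commute)
  show "0 + a = a" by (rule m2_eqI) simp_all
  show "- a + a = 0" by (rule m2_eqI) simp_all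
  show "a - b = a + - b" by (rule m2_eqI) simp_all
qed

instance m2 :: (ring_1) ring_1
proof
  fix a b c :: "'a m2"
  show "a * b * c = a * (b * c)" by (rule m2_eqI) (simp_all add: algebra_simps)
  show "(a + b) * c = a * c + b * c" by (rule m2_eqI) (simp_all add: algebra_simps)
  show "a * (b + c) = a * b + a * c" by (rule m2_eqI) (simp_all add: algebra_simps)
  show "1 * a = a" by (rule m2_eqI) simp_all
  show "a * 1 = a" by (rule m2_eqI) simp_all
  show "(0::'a m2) \<noteq> 1" by (metis m2_sel_zero(1) m2_sel_one(1) zero_neq_one)
qed

instantiation m2 :: (real_vector) real_vector begin
definition
  "scaleR r x = M2 (scaleR r (e11 x)) (scaleR r (e12 x)) (scaleR r (e21 x)) (scaleR r (e22 x))"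
lemma m2_scaleR_simps[simp]:
  "e11 (scaleR r x) = scaleR r (e11 x)" "e12 (scaleR r x) = scaleR r (e12 x)"
  "e21 (scaleR r x) = scaleR r (e21 x)" "e22 (scaleR r x) = scaleR r (e22 x)"
  by (simp_all add: scaleR_m2_def)
instance by (standard; rule m2_eqI; simp add: scaleR_add_right scaleR_add_left)
end

instance m2 :: (real_algebra_1) real_algebra_1
  by (standard; rule m2_eqI; simp add: scaleR_add_right)

instantiation m2 :: (real_normed_vector) real_normed_vector begin
definition norm_m2_def: "norm x = max (norm (e11 x) + norm (e12 x)) (norm (e21 x) + norm (e22 x))"
definition sgn_m2_def: "sgn (x :: 'a m2) = x /\<^sub>R norm x"
definition dist_m2_def: "dist (x :: 'a m2) y = norm (x - y)"
definition uniformity_m2_def: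
  "(uniformity :: ('a m2 \<times> 'a m2) filter) = (INF e\<in>{0 <..}. principal {(x, y). dist x y < e})"
definition open_m2_def:
  "open (U :: 'a m2 set) \<longleftrightarrow> (\<forall>x\<in>U. eventually (\<lambda>(x', y). x' = x \<longrightarrow> y \<in> U) uniformity)"
instance
proof
  fix r :: real and x y :: "'a m2"
  show "(norm x = 0) = (x = 0)"
  proof
    assume "norm x = 0"
    hence "norm (e11 x) = 0" "norm (e12 x) = 0" "norm (e21 x) = 0" "norm (e22 x) = 0"
      unfolding norm_m2_def by (smt (verit) norm_ge_zero)+
    thus "x = 0" by (auto intro!: m2_eqI)
  qed (simp add: norm_m2_def)
  show "norm (x + y) \<le> norm x + norm y"
    unfolding norm_m2_def
    using norm_triangle_ineq[of "e11 x" "e11 y"] norm_triangle_ineq[of "e12 x" "e12 y"]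
      norm_triangle_ineq[of "e21 x" "e21 y"] norm_triangle_ineq[of "e22 x" "e22 y"]
    by simp linarith
  show "norm (scaleR r x) = \<bar>r\<bar> * norm x"
    unfolding norm_m2_def by (simp add: distrib_left[symmetric] max_mult_distrib_left)
qed (rule sgn_m2_def dist_m2_def open_m2_def uniformity_m2_def)+
end

lemma norm_e11_le: "norm (e11 x) \<le> norm x" and norm_e12_le: "norm (e12 x) \<le> norm x"
  and norm_e21_le: "norm (e21 x) \<le> norm x" and norm_e22_le: "norm (e22 x) \<le> norm x"
  unfolding norm_m2_def by (smt (verit) norm_ge_zero)+

lemma norm_m2_le_sum: "norm x \<le> norm (e11 x) + norm (e12 x) + norm (e21 x) + norm (e22 x)"
  unfolding norm_m2_def by (smt (verit) norm_ge_zero)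

instance m2 :: (real_normed_algebra_1) real_normed_algebra_1
proof
  show "norm (1 :: 'a m2) = 1" by (simp add: norm_m2_def)
  fix x y :: "'a m2"
  obtain a b c d where x: "x = M2 a b c d" by (cases x)
  obtain a' b' c' d' where y: "y = M2 a' b' c' d'" by (cases y)
  have row: "norm (p * a' + q * c') + norm (p * b' + q * d') \<le> (norm p + norm q) * norm y"
    for p q :: 'a
  proof -
    have "norm (p * a' + q * c') + norm (p * b' + q * d')
        \<le> (norm p * norm a' + norm q * norm c') + (norm p * norm b' + norm q * norm d')"
      by (intro add_mono order_trans[OF norm_triangle_ineq] norm_mult_ineq)
    also have "\<dots> = norm p * (norm a' + norm b') + norm q * (norm c' + norm d')"
      by (simp add: algebra_simps)
    also have "\<dots> \<le> norm p * norm y + norm q * norm y"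
      by (intro add_mono mult_left_mono) (auto simp: y norm_m2_def)
    finally show ?thesis by (simp add: algebra_simps)
  qed
  have "norm (x * y) = max (norm (a * a' + b * c') + norm (a * b' + b * d'))
      (norm (c * a' + d * c') + norm (c * b' + d * d'))"
    by (simp add: x y norm_m2_def)
  also have "\<dots> \<le> max ((norm a + norm b) * norm y) ((norm c + norm d) * norm y)"
    by (intro max.mono row)
  also have "\<dots> = norm x * norm y"
  proof -
    have "max (p * n) (q * n) = max p q * n" if "n \<ge> 0" for p q n :: real
      using that by (smt (verit, best) mult_right_mono)
    hence "max ((norm a + norm b) * norm y) ((norm c + norm d) * norm y)
        = max (norm a + norm b) (norm c + norm d) * norm y" by simp
    moreover have "max (norm a + norm b) (norm c + norm d) = norm x" by (simp add: x norm_m2_def)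
    ultimately show ?thesis by simp
  qed
  finally show "norm (x * y) \<le> norm x * norm y" .
qed

lemma bounded_linear_m2_sel:
  "bounded_linear e11" "bounded_linear e12" "bounded_linear e21" "bounded_linear e22"
  by (rule bounded_linear_intro[where K = 1],
      simp_all add: norm_e11_le norm_e12_le norm_e21_le norm_e22_le)+

instance m2 :: (banach) banach
proof
  fix X :: "nat \<Rightarrow> 'a m2" assume X: "Cauchy X"
  have "convergent (\<lambda>n. e11 (X n))" "convergent (\<lambda>n. e12 (X n))"
    "convergent (\<lambda>n. e21 (X n))" "convergent (\<lambda>n. e22 (X n))"
    using bounded_linear_m2_sel[THEN bounded_linear.Cauchy, OF X]
    by (simp_all add: Cauchy_convergent_iff)
  then obtain l1 l2 l3 l4 where l: "(\<lambda>n. e11 (X n)) \<longlonglongrightarrow> l1" "(\<lambda>n. e12 (X n)) \<longlonglongrightarrow> l2"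
    "(\<lambda>n. e21 (X n)) \<longlonglongrightarrow> l3" "(\<lambda>n. e22 (X n)) \<longlonglongrightarrow> l4"
    unfolding convergent_def by blast
  define L where "L = M2 l1 l2 l3 l4"
  define d where "d n = norm (e11 (X n) - l1) + norm (e12 (X n) - l2)
    + norm (e21 (X n) - l3) + norm (e22 (X n) - l4)" for n
  have bound: "norm (X n - L) \<le> d n" for n
    using norm_m2_le_sum[of "X n - L"] by (simp add: L_def d_def)
  have "d \<longlonglongrightarrow> 0"
    unfolding d_def by (intro tendsto_add_zero tendsto_norm_zero LIM_zero l)
  hence "(\<lambda>n. X n - L) \<longlonglongrightarrow> 0"
    by (rule Lim_null_comparison[OF always_eventually[OF allI[OF bound]]])
  hence "X \<longlonglongrightarrow> L" by (simp only: LIM_zero_iff)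
  thus "convergent X" by (rule convergentI)
qed

instantiation m2 :: (complex_banach_algebra_1) complex_banach_algebra_1 begin
definition scaleC_m2_def:
  "scaleC c x = M2 (scaleC c (e11 x)) (scaleC c (e12 x)) (scaleC c (e21 x)) (scaleC c (e22 x))"
lemma m2_scaleC_simps[simp]:
  "e11 (scaleC c x) = scaleC c (e11 x)" "e12 (scaleC c x) = scaleC c (e12 x)"
  "e21 (scaleC c x) = scaleC c (e21 x)" "e22 (scaleC c x) = scaleC c (e22 x)"
  by (simp_all add: scaleC_m2_def)
instance
proof
  fix c d :: complex and x y :: "'a m2" and r :: real
  show "scaleC c (x + y) = scaleC c x + scaleC c y" by (auto intro!: m2_eqI simp: scaleC_add_right)
  show "scaleC (c + d) x = scaleC c x + scaleC d x" by (auto intro!: m2_eqI simp: scaleC_add_left)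
  show "scaleC c (scaleC d x) = scaleC (c * d) x" by (auto intro!: m2_eqI simp: scaleC_scaleC)
  show "scaleC 1 x = x" by (auto intro!: m2_eqI simp: scaleC_one)
  show "scaleR r x = scaleC (complex_of_real r) x" by (auto intro!: m2_eqI simp: scaleR_scaleC)
  show "norm (scaleC c x) = cmod c * norm x"
    unfolding norm_m2_def by (simp add: norm_scaleC distrib_left[symmetric] max_mult_distrib_left)
  show "scaleC c x * y = scaleC c (x * y)" by (auto intro!: m2_eqI simp: mult_scaleC_left scaleC_add_right)
  show "x * scaleC c y = scaleC c (x * y)" by (auto intro!: m2_eqI simp: mult_scaleC_right scaleC_add_right)
qed
end

definition vec_of_m2 :: "'a::zero m2 \<Rightarrow> 'a^2^2" where
  "vec_of_m2 X = mk2 (e11 X) (e12 X) (e21 X) (e22 X)"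

definition m2_of_vec :: "'a^2^2 \<Rightarrow> 'a m2" where
  "m2_of_vec Z = M2 (Z $ 1 $ 1) (Z $ 1 $ 2) (Z $ 2 $ 1) (Z $ 2 $ 2)"

lemma mk2_nth[simp]:
  "mk2 a b c d $ 1 $ 1 = a" "mk2 a b c d $ 1 $ 2 = b" "mk2 a b c d $ 2 $ 1 = c" "mk2 a b c d $ 2 $ 2 = d"
  by (simp_all add: mk2_def)

lemma vec2_eqI:
  fixes X Y :: "'a^2^2"
  assumes "X $ 1 $ 1 = Y $ 1 $ 1" "X $ 1 $ 2 = Y $ 1 $ 2" "X $ 2 $ 1 = Y $ 2 $ 1" "X $ 2 $ 2 = Y $ 2 $ 2"
  shows "X = Y"
proof -
  have "X $ i $ j = Y $ i $ j" for i j :: 2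
    using exhaust_2[of i] exhaust_2[of j] assms by auto
  thus ?thesis by (simp add: vec_eq_iff)
qed

lemma vec_of_m2_of_vec: "vec_of_m2 (m2_of_vec Z) = Z"
  by (rule vec2_eqI) (simp_all add: vec_of_m2_def m2_of_vec_def)

lemma m2_of_vec_of_m2: "m2_of_vec (vec_of_m2 X) = X"
  by (cases X) (simp add: vec_of_m2_def m2_of_vec_def)

lemma vec_of_m2_inj: "vec_of_m2 X = vec_of_m2 Y \<Longrightarrow> X = Y"
  by (metis m2_of_vec_of_m2)

lemma vec_of_m2_M2: "vec_of_m2 (M2 a b c d) = mk2 a b c d" by (simp add: vec_of_m2_def)

lemma vec_of_m2_mult: "vec_of_m2 (X * Y) = vec_of_m2 X ** vec_of_m2 (Y :: 'a::ring_1 m2)"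
  by (rule vec2_eqI) (simp_all add: vec_of_m2_def matrix_matrix_mult_def sum_2)

lemma vec_of_m2_one: "vec_of_m2 (1 :: 'a::ring_1 m2) = mat 1"
  by (rule vec2_eqI) (simp_all add: vec_of_m2_def mat_def)

lemma vec_of_m2_zero: "vec_of_m2 (0 :: 'a::ring_1 m2) = 0"
  by (rule vec2_eqI) (simp_all add: vec_of_m2_def)

lemma vec_of_m2_diff: "vec_of_m2 (X - Y) = vec_of_m2 X - vec_of_m2 (Y :: 'a::ring_1 m2)"
  by (rule vec2_eqI) (simp_all add: vec_of_m2_def)

lemma vec_of_m2_pow: "vec_of_m2 (X ^ n) = mpow (vec_of_m2 X) n" for X :: "'a::ring_1 m2"
  by (induction n) (simp_all add: vec_of_m2_one vec_of_m2_mult)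

lemma norm_vec_of_m2_le: "norm (vec_of_m2 X) \<le> 4 * norm (X :: 'a::real_normed_vector m2)"
proof -
  have row: "norm (vec_of_m2 X $ i) \<le> 2 * norm X" for i
  proof -
    have "norm (vec_of_m2 X $ i) \<le> (\<Sum>j\<in>UNIV. norm (vec_of_m2 X $ i $ j))"
      unfolding norm_vec_def by (rule L2_set_le_sum) auto
    also have "\<dots> \<le> (\<Sum>j\<in>(UNIV::2 set). norm X)"
    proof (rule sum_mono)
      fix j :: 2
      show "norm (vec_of_m2 X $ i $ j) \<le> norm X"
        using exhaust_2[of i] exhaust_2[of j]
          norm_e11_le[of X] norm_e12_le[of X] norm_e21_le[of X] norm_e22_le[of X]
        by (auto simp: vec_of_m2_def)
    qed
    finally show ?thesis by simp
  qed
  have "norm (vec_of_m2 X) \<le> (\<Sum>i\<in>UNIV. norm (vec_of_m2 X $ i))"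
    unfolding norm_vec_def by (rule L2_set_le_sum) auto
  also have "\<dots> \<le> (\<Sum>i\<in>(UNIV::2 set). 2 * norm X)" by (rule sum_mono) (rule row)
  finally show ?thesis by simp
qed

lemma norm_le_vec_of_m2: "norm X \<le> 4 * norm (vec_of_m2 (X :: 'a::real_normed_vector m2))"
proof -
  have e: "norm (vec_of_m2 X $ i $ j) \<le> norm (vec_of_m2 X)" for i j
    using Finite_Cartesian_Product.norm_nth_le[of "vec_of_m2 X $ i" j]
      Finite_Cartesian_Product.norm_nth_le[of "vec_of_m2 X" i] by linarith
  show ?thesis using norm_m2_le_sum[of X] e[of 1 1] e[of 1 2] e[of 2 1] e[of 2 2]
    by (simp add: vec_of_m2_def)
qed

lemma quasinilpotent2_vec_of_m2:
  fixes X :: "'a::real_normed_algebra_1 m2"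
  shows "quasinilpotent2 (vec_of_m2 X) \<longleftrightarrow> quasinilpotent X"
proof -
  have "quasinilpotent2 (vec_of_m2 X) \<longleftrightarrow> (\<forall>\<epsilon>>0. \<exists>C. \<forall>n. norm (vec_of_m2 (X ^ n)) \<le> C * \<epsilon> ^ n)"
    unfolding quasinilpotent2_def vec_of_m2_pow by (rule root_tendsto_0_iff_geometric_bound) simp
  also have "\<dots> \<longleftrightarrow> (\<forall>\<epsilon>>0. \<exists>C. \<forall>n. norm (X ^ n) \<le> C * \<epsilon> ^ n)"
  proof (intro iffI allI impI)
    fix \<epsilon> :: real assume e: "\<epsilon> > 0"
    assume "\<forall>\<epsilon>>0. \<exists>C. \<forall>n. norm (vec_of_m2 (X ^ n)) \<le> C * \<epsilon> ^ n"
    then obtain C where C: "\<And>n. norm (vec_of_m2 (X ^ n)) \<le> C * \<epsilon> ^ n" using e by blast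
    have "norm (X ^ n) \<le> (4 * C) * \<epsilon> ^ n" for n
      using norm_le_vec_of_m2[of "X ^ n"] C[of n] by simp
    thus "\<exists>C. \<forall>n. norm (X ^ n) \<le> C * \<epsilon> ^ n" by blast
  next
    fix \<epsilon> :: real assume e: "\<epsilon> > 0"
    assume "\<forall>\<epsilon>>0. \<exists>C. \<forall>n. norm (X ^ n) \<le> C * \<epsilon> ^ n"
    then obtain C where C: "\<And>n. norm (X ^ n) \<le> C * \<epsilon> ^ n" using e by blast
    have "norm (vec_of_m2 (X ^ n)) \<le> (4 * C) * \<epsilon> ^ n" for n
      using norm_vec_of_m2_le[of "X ^ n"] C[of n] by simp
    thus "\<exists>C. \<forall>n. norm (vec_of_m2 (X ^ n)) \<le> C * \<epsilon> ^ n" by blast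
  qed
  also have "\<dots> \<longleftrightarrow> quasinilpotent X" by (rule quasinilpotent_iff_geometric_bound[symmetric])
  finally show ?thesis .
qed

lemma is_gdrazin_inv2_vec_of_m2:
  fixes X Y :: "'a::real_normed_algebra_1 m2"
  shows "is_gdrazin_inv2 (vec_of_m2 X) (vec_of_m2 Y) \<longleftrightarrow> is_gdrazin_inv X Y"
  unfolding is_gdrazin_inv2_def is_gdrazin_inv_def
  by (simp add: vec_of_m2_mult[symmetric] vec_of_m2_pow[symmetric] vec_of_m2_diff[symmetric]
      quasinilpotent2_vec_of_m2)
    (metis vec_of_m2_inj)

lemma gd2_vec_of_m2:
  assumes "is_gdrazin_inv X Y"
  shows "gdrazin_invertible2 (vec_of_m2 X)" "gd2 (vec_of_m2 X) = vec_of_m2 Y"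
proof -
  have Y: "is_gdrazin_inv2 (vec_of_m2 X) (vec_of_m2 Y)"
    using assms is_gdrazin_inv2_vec_of_m2 by blast
  thus "gdrazin_invertible2 (vec_of_m2 X)" unfolding gdrazin_invertible2_def by blast
  show "gd2 (vec_of_m2 X) = vec_of_m2 Y"
    unfolding gd2_def
  proof (rule the_equality)
    show "is_gdrazin_inv2 (vec_of_m2 X) (vec_of_m2 Y)" by (rule Y)
    fix Z assume "is_gdrazin_inv2 (vec_of_m2 X) Z"
    hence "is_gdrazin_inv X (m2_of_vec Z)"
      by (simp add: is_gdrazin_inv2_vec_of_m2[symmetric] vec_of_m2_of_vec)
    hence "m2_of_vec Z = Y" using gdrazin_inv_unique[OF _ assms] by blast
    thus "Z = vec_of_m2 Y" by (metis vec_of_m2_of_vec)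
  qed
qed

section \<open>Block matrices\<close>

lemma m2_diag_power: "(M2 x 0 0 y) ^ n = M2 (x ^ n) 0 0 (y ^ n)" for x y :: "'a::ring_1"
  by (induction n) (auto intro!: m2_eqI simp: one_m2_def)

lemma quasinilpotent_m2_diag:
  fixes x y :: "'a::real_normed_algebra_1"
  assumes x: "quasinilpotent x" and y: "quasinilpotent y"
  shows "quasinilpotent (M2 x 0 0 y)"
proof (rule quasinilpotentI)
  fix \<epsilon> :: real assume \<epsilon>: "\<epsilon> > 0"
  obtain C1 where C1: "\<And>n. norm (x ^ n) \<le> C1 * \<epsilon> ^ n" using quasinilpotentE[OF x \<epsilon>] by blast
  obtain C2 where C2: "\<And>n. norm (y ^ n) \<le> C2 * \<epsilon> ^ n" using quasinilpotentE[OF y \<epsilon>] by blast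
  have "norm (M2 x 0 0 y ^ n) \<le> (C1 + C2) * \<epsilon> ^ n" for n
  proof -
    have "norm (M2 x 0 0 y ^ n) = max (norm (x ^ n)) (norm (y ^ n))"
      by (simp add: m2_diag_power norm_m2_def)
    also have "\<dots> \<le> norm (x ^ n) + norm (y ^ n)" by simp
    also have "\<dots> \<le> (C1 + C2) * \<epsilon> ^ n" using C1[of n] C2[of n] by (simp add: distrib_right)
    finally show ?thesis .
  qed
  thus "\<exists>C. \<forall>n. norm (M2 x 0 0 y ^ n) \<le> C * \<epsilon> ^ n" by blast
qed

lemma is_gdrazin_inv_m2_diag:
  fixes A D :: "'a::real_normed_algebra_1"
  assumes gA: "is_gdrazin_inv A a" and gD: "is_gdrazin_inv D d"
  shows "is_gdrazin_inv (M2 A 0 0 D) (M2 a 0 0 d)"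
proof -
  note GA = is_gdrazin_invD[OF gA] and GD = is_gdrazin_invD[OF gD]
  have "M2 A 0 0 D - M2 A 0 0 D * M2 A 0 0 D * M2 a 0 0 d = M2 (A - A * A * a) 0 0 (D - D * D * d)"
    by (rule m2_eqI) simp_all
  hence "quasinilpotent (M2 A 0 0 D - M2 A 0 0 D * M2 A 0 0 D * M2 a 0 0 d)"
    using quasinilpotent_m2_diag[OF GA(3) GD(3)] by simp
  moreover have "M2 a 0 0 d * M2 A 0 0 D = M2 A 0 0 D * M2 a 0 0 d"
    by (rule m2_eqI) (simp_all add: GA(1) GD(1))
  moreover have "M2 a 0 0 d * M2 A 0 0 D * M2 a 0 0 d = M2 a 0 0 d"
    by (rule m2_eqI) (simp_all add: GA(2) GD(2))
  ultimately show ?thesis unfolding is_gdrazin_inv_def power2_eq_square by simp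
qed

lemma square_mult_spectral_complement:
  fixes Q b :: "'a::ring_1"
  assumes c: "b * Q = Q * b" and i: "b * Q * b = b"
  shows "(Q * (1 - Q * b)) * (Q * (1 - Q * b)) = Q * Q * (1 - Q * b)"
proof -
  have "Q * b * Q = Q * (Q * b)" by (simp only: mult.assoc c)
  hence "(1 - Q * b) * Q = Q * (1 - Q * b)" by (simp add: algebra_simps)
  moreover have "Q * b * (Q * b) = Q * b" using i by (simp add: mult.assoc)
  hence "(1 - Q * b) * (1 - Q * b) = 1 - Q * b" by (simp add: algebra_simps)
  moreover have "(Q * (1 - Q * b)) * (Q * (1 - Q * b)) = Q * ((1 - Q * b) * Q) * (1 - Q * b)"
    by (simp only: mult.assoc)
  ultimately show ?thesis by (simp only: mult.assoc)
qed

lemma is_gdrazin_inv_m2_antidiag: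
  fixes B C :: "'a::real_normed_algebra_1"
  assumes gCB: "is_gdrazin_inv (C * B) y" and gBC: "is_gdrazin_inv (B * C) z"
  shows "is_gdrazin_inv (M2 0 B C 0) (M2 0 (B * y) (C * z) 0)"
proof -
  note G1 = is_gdrazin_invD[OF gCB] and I1 = is_gdrazin_inv_identities[OF gCB]
  note G2 = is_gdrazin_invD[OF gBC]
  have z: "z = B * y * y * C" by (rule gdrazin_inv_unique[OF gBC is_gdrazin_inv_cline[OF gCB]])
  define Q where "Q = M2 0 B C 0"
  define b where "b = M2 0 (B * y) (C * z) 0"
  have Qb: "Q * b = M2 (B * (C * z)) 0 0 (C * (B * y))"
    unfolding Q_def b_def by (rule m2_eqI) simp_all
  have "B * (C * z) = B * (C * B * y * y) * C" by (simp add: z mult.assoc)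
  hence BC: "B * y * C = B * (C * z)" by (simp only: I1(2))
  have "C * z * B = C * B * (y * y * (C * B))" by (simp add: z mult.assoc)
  also have "\<dots> = C * (B * y)" unfolding I1(4) by (simp only: mult.assoc)
  finally have CB: "C * z * B = C * (B * y)" .
  have comm: "b * Q = Q * b" unfolding Qb unfolding Q_def b_def
    using BC CB by (intro m2_eqI) simp_all
  have inv: "b * Q * b = b" unfolding Q_def b_def
    using G1(2) G2(2) by (intro m2_eqI) (simp_all add: mult.assoc)
  have "Q * Q * (1 - Q * b) = M2 (B * C - B * C * (B * C) * z) 0 0 (C * B - C * B * (C * B) * y)"
    unfolding Qb unfolding Q_def by (rule m2_eqI) (simp_all add: algebra_simps)
  hence "(Q * (1 - Q * b)) * (Q * (1 - Q * b))
      = M2 (B * C - B * C * (B * C) * z) 0 0 (C * B - C * B * (C * B) * y)"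
    by (simp only: square_mult_spectral_complement[OF comm inv])
  hence "quasinilpotent ((Q * (1 - Q * b)) * (Q * (1 - Q * b)))"
    using quasinilpotent_m2_diag[OF G2(3) G1(3)] by simp
  hence "quasinilpotent (Q * (1 - Q * b))" by (rule quasinilpotent_of_square)
  moreover have "Q * (1 - Q * b) = Q - Q * Q * b" by (simp add: algebra_simps)
  ultimately show ?thesis
    unfolding is_gdrazin_inv_def power2_eq_square Q_def[symmetric] b_def[symmetric]
    using comm inv by simp
qed

lemma m2_block_spectral_condition:
  fixes A B C D :: "'a::complex_banach_algebra_1"
  assumes BD: "B * D = scaleC lam (spi (B * C) * A * B * spi D)"
    and CA: "C * A = scaleC lam (spi (C * B) * D * C * spi A)"
  defines "P \<equiv> M2 A 0 0 D" and "Q \<equiv> M2 0 B C 0"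
    and "Pd \<equiv> M2 (gd A) 0 0 (gd D)" and "Qd \<equiv> M2 0 (B * gd (C * B)) (C * gd (B * C)) 0"
  shows "Q * P = scaleC lam ((1 - Q * Qd) * P * Q * (1 - P * Pd))"
proof -
  have "(1 - Q * Qd) * P * Q * (1 - P * Pd)
      = M2 0 (spi (B * C) * A * B * spi D) (spi (C * B) * D * C * spi A) 0"
    unfolding P_def Q_def Pd_def Qd_def spi_def by (rule m2_eqI) (simp_all add: mult.assoc)
  thus ?thesis unfolding P_def Q_def by (intro m2_eqI) (simp_all add: BD CA)
qed

lemma m2_block_gdrazin:
  fixes A B C D :: "'a::complex_banach_algebra_1"
  assumes lam: "lam \<noteq> 0"
    and gA: "gdrazin_invertible A" and gD: "gdrazin_invertible D"
    and gBC: "gdrazin_invertible (B * C)" and gCB: "gdrazin_invertible (C * B)"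
    and BD: "B * D = scaleC lam (spi (B * C) * A * B * spi D)"
    and CA: "C * A = scaleC lam (spi (C * B) * D * C * spi A)"
  defines "P \<equiv> M2 A 0 0 D" and "Q \<equiv> M2 0 B C 0"
    and "Pd \<equiv> M2 (gd A) 0 0 (gd D)" and "Qd \<equiv> M2 0 (B * gd (C * B)) (C * gd (B * C)) 0"
  shows "is_gdrazin_inv (P + Q) (Pd + Qd)" and "Pd * Q = 0" and "P * Qd = 0"
    and "M2 (gd A * spi (B * C)) (spi A * B * gd (C * B)) (spi D * C * gd (B * C)) (gd D * spi (C * B))
           = Pd + Qd"
proof -
  have gP: "is_gdrazin_inv P Pd" unfolding P_def Pd_def
    by (intro is_gdrazin_inv_m2_diag is_gdrazin_inv_gd gA gD)
  have gQ: "is_gdrazin_inv Q Qd" unfolding Q_def Qd_def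
    by (intro is_gdrazin_inv_m2_antidiag is_gdrazin_inv_gd gBC gCB)
  have spectral: "Q * P = scaleC lam ((1 - Q * Qd) * P * Q * (1 - P * Pd))"
    unfolding P_def Q_def Pd_def Qd_def by (rule m2_block_spectral_condition[OF BD CA])
  note S = spectral_condition_scaled_commute[OF gP gQ spectral]
  have Z: "Pd * Q = 0" "P * Qd = 0"
    using spectral_condition_gd_mult_eq_0[OF gP gQ spectral lam]
      spectral_condition_mult_gd_eq_0[OF gP gQ spectral lam] by simp_all
  show "is_gdrazin_inv (P + Q) (Pd + Qd)"
    by (rule is_gdrazin_inv_add_scaled_commute[OF lam gP gQ S(1) Z(1) S(2) Z(2) S(3)])
  show "Pd * Q = 0" "P * Qd = 0" by (fact Z(1), fact Z(2))
  show "M2 (gd A * spi (B * C)) (spi A * B * gd (C * B)) (spi D * C * gd (B * C)) (gd D * spi (C * B))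
      = Pd + Qd"
  proof -
    have "gd A * B = 0" "gd D * C = 0"
      using arg_cong[OF Z(1), of e12] arg_cong[OF Z(1), of e21] by (simp_all add: Pd_def Q_def)
    hence "gd A * (B * w) = 0" "gd D * (C * w) = 0" for w by (simp_all flip: mult.assoc)
    thus ?thesis unfolding Pd_def Qd_def spi_def by (intro m2_eqI) (simp_all add: algebra_simps)
  qed
qed

theorem theorem3p1:
  fixes A B C D :: "'a::complex_banach_algebra_1" and lam :: complex
  assumes "lam \<noteq> 0"
    and "gdrazin_invertible A" and "gdrazin_invertible D"
    and "gdrazin_invertible (B * C)" and "gdrazin_invertible (C * B)"
    and "B * D = scaleC lam (spi (B * C) * A * B * spi D)"
    and "C * A = scaleC lam (spi (C * B) * D * C * spi A)"
  shows "let M = mk2 A B C D; P = mk2 A 0 0 D; Q = mk2 0 B C 0;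
             Pd = mk2 (gd A) 0 0 (gd D);
             Qd = mk2 0 (B * gd (C * B)) (C * gd (B * C)) 0;
             Ppi = mat 1 - P ** Pd; Qpi = mat 1 - Q ** Qd;
             S1 = (\<lambda>n. mpow Pd (n + 2) ** Q ** mpow M n ** Qpi);
             S2 = (\<lambda>n. mpow M n ** P ** mpow Qd (n + 2));
             S3 = (\<lambda>n k. mpow Pd (k + 1) ** Q ** mpow M (n + k) ** P ** mpow Qd (n + 2));
             S4 = (\<lambda>n. mpow Pd (n + 2) ** Q ** mpow M n ** P ** Qd)
         in summable S1 \<and> summable S2 \<and> (\<forall>n. summable (S3 n))
            \<and> summable (\<lambda>n. \<Sum>k. S3 n k) \<and> summable S4
            \<and> gdrazin_invertible2 M
            \<and> gd2 M = mk2 (gd A * spi (B * C)) (spi A * B * gd (C * B))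
                          (spi D * C * gd (B * C)) (gd D * spi (C * B))
                      + (\<Sum>n. S1 n) + Ppi ** (\<Sum>n. S2 n)
                      - (\<Sum>n. \<Sum>k. S3 n k) - (\<Sum>n. S4 n)"
proof -
  define P Q Pd Qd where "P = M2 A 0 0 D" and "Q = M2 0 B C 0"
    and "Pd = M2 (gd A) 0 0 (gd D)" and "Qd = M2 0 (B * gd (C * B)) (C * gd (B * C)) 0"
  note block = m2_block_gdrazin[OF assms, folded P_def Q_def Pd_def Qd_def]
  \<comment> \<open>Since \<open>P\<^sup>d Q = 0\<close> and \<open>P Q\<^sup>d = 0\<close>, every term of every series vanishes.\<close>
  have Pd_Q: "Pd ^ (k + 1) * Q = 0" "Pd ^ (k + 2) * Q = 0" for k
    using block(2) by (simp_all add: power_Suc2 mult.assoc del: power_Suc)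
  have P_Qd: "X * P * Qd ^ (k + 2) = 0" for X k
  proof -
    have "X * P * Qd ^ (k + 2) = X * (P * Qd) * Qd ^ (k + 1)" by (simp add: mult.assoc)
    thus ?thesis using block(3) by simp
  qed
  have blocks: "mk2 A B C D = vec_of_m2 (P + Q)" "mk2 A 0 0 D = vec_of_m2 P" "mk2 0 B C 0 = vec_of_m2 Q"
    "mk2 (gd A) 0 0 (gd D) = vec_of_m2 Pd" "mk2 0 (B * gd (C * B)) (C * gd (B * C)) 0 = vec_of_m2 Qd"
    by (simp_all add: P_def Q_def Pd_def Qd_def vec_of_m2_def)
  have first: "mk2 (gd A * spi (B * C)) (spi A * B * gd (C * B))
      (spi D * C * gd (B * C)) (gd D * spi (C * B)) = vec_of_m2 (Pd + Qd)"
    by (simp only: block(4)[symmetric] vec_of_m2_M2)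
  show ?thesis
    unfolding Let_def blocks first
    unfolding vec_of_m2_one[symmetric] vec_of_m2_mult[symmetric] vec_of_m2_pow[symmetric]
      vec_of_m2_diff[symmetric]
    unfolding Pd_Q P_Qd mult_zero_left vec_of_m2_zero
    using gd2_vec_of_m2[OF block(1)] by simp
qed

end
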